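(* Let $\mathbb{F}\in\{\mathbb{R},\mathbb{C}\}$, let $N\ge 2$, $M\ge 2$ and $1\le Q\le M$ be integers, write $\mathcal{M}=\{1,\dots,M\}$, let $0\le\epsilon\le 1$, and let $\mathbf{H}_1,\dots,\mathbf{H}_M$ be $N\times N$ positive semidefinite matrices (real symmetric if $\mathbb{F}=\mathbb{R}$, complex Hermitian if $\mathbb{F}=\mathbb{C}$). Consider the problem (SDP1): minimize $\mathrm{Tr}[\mathbf{X}^{(2)}]$ over a real symmetric $(M+1)\times(M+1)$ matrix $\mathbf{X}^{(1)}$ and an $N\times N$ matrix $\mathbf{X}^{(2)}$ (real symmetric if $\mathbb{F}=\mathbb{R}$, Hermitian if $\mathbb{F}=\mathbb{C}$) subject to $\mathrm{Tr}[\mathbf{H}_i\mathbf{X}^{(2)}]\ge \frac{1+\mathbf{X}^{(1)}[i,M+1]}{2}+\frac{1-\mathbf{X}^{(1)}[i,M+1]}{2}\,\epsilon$ for all $i\in\mathcal{M}$, $\sum_{i\in\mathcal{M}}\mathbf{X}^{(1)}[i,M+1]=2Q-M$, $\mathbf{X}^{(1)}[i,i]=1$ for $i=1,\dots,M+1$, $\mathbf{X}^{(1)}\succeq 0$, $\mathbf{X}^{(2)}\succeq 0$. Consider also the problem (SDP2): minimize $\mathrm{Tr}[\mathbf{X}^{(2)}]$ over $\boldsymbol{\beta}=(\beta_1,\dots,\beta_M)^T\in\mathbb{R}^M$ and an $N\times N$ matrix $\mathbf{X}^{(2)}$ (real symmetric if $\mathbb{F}=\mathbb{R}$, Hermitian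 if $\mathbb{F}=\mathbb{C}$) subject to $\mathrm{Tr}[\mathbf{H}_i\mathbf{X}^{(2)}]\ge \beta_i+(1-\beta_i)\epsilon$ for all $i\in\mathcal{M}$, $\sum_{i\in\mathcal{M}}\beta_i=Q$, $0\le\beta_i\le 1$ for all $i\in\mathcal{M}$, $\mathbf{X}^{(2)}\succeq 0$. If $(\tilde{\mathbf{X}}^{(1)},\tilde{\mathbf{X}}^{(2)})$ is an optimal solution of (SDP1), then $(\tilde{\boldsymbol{\beta}},\tilde{\mathbf{X}}^{(2)})$ with $\tilde{\boldsymbol{\beta}}[i]=\frac12+\frac12\tilde{\mathbf{X}}^{(1)}[i,M+1]$, $i\in\mathcal{M}$, is an optimal solution of (SDP2). Conversely, if $(\bar{\boldsymbol{\beta}},\bar{\mathbf{X}}^{(2)})$ is an optimal solution of (SDP2), then there is a real symmetric matrix $\mathbf{X}^{(1)}$ with $\mathbf{X}^{(1)}[i,M+1]=2\bar{\boldsymbol{\beta}}[i]-1$ for all $i\in\mathcal{M}$ such that $(\mathbf{X}^{(1)},\bar{\mathbf{X}}^{(2)})$ is an optimal solution of (SDP1).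
   Context: $\mathbf{X}[i,j]$ denotes the $(i,j)$ entry of a matrix, $\mathbf{X}\succeq 0$ means positive semidefinite, and $\mathrm{Tr}$ is the trace. (SDP1) is the semidefinite relaxation of a lifted reformulation of the mixed binary problem "minimize $\|\mathbf{w}\|^2$ over $\mathbf{w}\in\mathbb{F}^N$, $\boldsymbol\beta\in\{0,1\}^M$ subject to $\mathbf{w}^H\mathbf{H}_i\mathbf{w}\ge\beta_i+(1-\beta_i)\epsilon$, $\sum_i\beta_i=Q$", in which the binary variables are encoded as $\alpha_i=2\beta_i-1\in\{-1,1\}$ together with an auxiliary variable $\ell\in\{-1,1\}$ occupying index $M+1$. *)

theory Defs
  imports "Jordan_Normal_Form.Matrix" "Jordan_Normal_Form.Conjugate"
begin

text \<open>Matrices over F are JNF matrices over a type 'a that is instantiated with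
  real (F = R) or complex (F = C).  The complex numbers carry the partial order of
  HOL-Library.Complex_Order (z \<le> w iff Re z \<le> Re w and Im z = Im w), so
  "0 \<le> z" for complex z means that z is a nonnegative real number.
  Indices are 0-based: paper index i in {1..M} is i-1 in {0..<M}, and the
  auxiliary index M+1 is M.\<close>

definition mtrace :: "'a::comm_ring_1 mat \<Rightarrow> 'a" where
  "mtrace A = (\<Sum>i\<in>{0..<dim_row A}. A $$ (i, i))"

text \<open>Hermitian (= real symmetric when 'a = real, since conjugation is the identity).\<close>
definition hermitian_mat :: "nat \<Rightarrow> 'a::conjugatable_ring mat \<Rightarrow> bool" where
  "hermitian_mat n A \<longleftrightarrow> A \<in> carrier_mat n n \<and>
     (\<forall>i<n. \<forall>j<n. A $$ (i, j) = conjugate (A $$ (j, i)))"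

definition psd_mat :: "nat \<Rightarrow> 'a::conjugatable_ordered_field mat \<Rightarrow> bool" where
  "psd_mat n A \<longleftrightarrow> hermitian_mat n A \<and>
     (\<forall>x \<in> carrier_vec n. 0 \<le> (A *\<^sub>v x) \<bullet>c x)"

definition sdp1_feasible ::
  "nat \<Rightarrow> nat \<Rightarrow> nat \<Rightarrow> real \<Rightarrow> (nat \<Rightarrow> 'a::{conjugatable_ordered_field,real_algebra_1} mat)
   \<Rightarrow> real mat \<Rightarrow> 'a mat \<Rightarrow> bool" where
  "sdp1_feasible N M Q \<epsilon> H X1 X2 \<longleftrightarrow>
     hermitian_mat (M + 1) X1 \<and> hermitian_mat N X2 \<and>
     (\<forall>i<M. mtrace (H i * X2) \<ge>
        of_real ((1 + X1 $$ (i, M)) / 2 + (1 - X1 $$ (i, M)) / 2 * \<epsilon>)) \<and>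
     (\<Sum>i<M. X1 $$ (i, M)) = 2 * real Q - real M \<and>
     (\<forall>i<M + 1. X1 $$ (i, i) = 1) \<and>
     psd_mat (M + 1) X1 \<and> psd_mat N X2"

definition sdp1_optimal ::
  "nat \<Rightarrow> nat \<Rightarrow> nat \<Rightarrow> real \<Rightarrow> (nat \<Rightarrow> 'a::{conjugatable_ordered_field,real_algebra_1} mat)
   \<Rightarrow> real mat \<Rightarrow> 'a mat \<Rightarrow> bool" where
  "sdp1_optimal N M Q \<epsilon> H X1 X2 \<longleftrightarrow> sdp1_feasible N M Q \<epsilon> H X1 X2 \<and>
     (\<forall>Y1 Y2. sdp1_feasible N M Q \<epsilon> H Y1 Y2 \<longrightarrow> mtrace X2 \<le> mtrace Y2)"

definition sdp2_feasible ::
  "nat \<Rightarrow> nat \<Rightarrow> nat \<Rightarrow> real \<Rightarrow> (nat \<Rightarrow> 'a::{conjugatable_ordered_field,real_algebra_1} mat)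
   \<Rightarrow> real vec \<Rightarrow> 'a mat \<Rightarrow> bool" where
  "sdp2_feasible N M Q \<epsilon> H \<beta> X2 \<longleftrightarrow>
     \<beta> \<in> carrier_vec M \<and> hermitian_mat N X2 \<and>
     (\<forall>i<M. mtrace (H i * X2) \<ge> of_real (\<beta> $ i + (1 - \<beta> $ i) * \<epsilon>)) \<and>
     (\<Sum>i<M. \<beta> $ i) = real Q \<and>
     (\<forall>i<M. 0 \<le> \<beta> $ i \<and> \<beta> $ i \<le> 1) \<and>
     psd_mat N X2"

definition sdp2_optimal ::
  "nat \<Rightarrow> nat \<Rightarrow> nat \<Rightarrow> real \<Rightarrow> (nat \<Rightarrow> 'a::{conjugatable_ordered_field,real_algebra_1} mat)
   \<Rightarrow> real vec \<Rightarrow> 'a mat \<Rightarrow> bool" where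
  "sdp2_optimal N M Q \<epsilon> H \<beta> X2 \<longleftrightarrow> sdp2_feasible N M Q \<epsilon> H \<beta> X2 \<and>
     (\<forall>\<gamma> Y2. sdp2_feasible N M Q \<epsilon> H \<gamma> Y2 \<longrightarrow> mtrace X2 \<le> mtrace Y2)"

definition lemma2p1_claim :: "'a::{conjugatable_ordered_field,real_algebra_1} itself \<Rightarrow> bool" where
  "lemma2p1_claim _ \<longleftrightarrow>
   (\<forall>(N::nat) (M::nat) (Q::nat) (\<epsilon>::real) (H :: nat \<Rightarrow> 'a mat).
      N \<ge> 2 \<longrightarrow> M \<ge> 2 \<longrightarrow> 1 \<le> Q \<longrightarrow> Q \<le> M \<longrightarrow> 0 \<le> \<epsilon> \<longrightarrow> \<epsilon> \<le> 1 \<longrightarrow>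
      (\<forall>i<M. psd_mat N (H i)) \<longrightarrow>
      (\<forall>X1 X2. sdp1_optimal N M Q \<epsilon> H X1 X2 \<longrightarrow>
         sdp2_optimal N M Q \<epsilon> H (vec M (\<lambda>i. 1/2 + 1/2 * X1 $$ (i, M))) X2) \<and>
      (\<forall>\<beta> X2. sdp2_optimal N M Q \<epsilon> H \<beta> X2 \<longrightarrow>
         (\<exists>X1. hermitian_mat (M + 1) X1 \<and> (\<forall>i<M. X1 $$ (i, M) = 2 * \<beta> $ i - 1) \<and>
               sdp1_optimal N M Q \<epsilon> H X1 X2)))"

end

theory Submission
  imports Defs
begin

text \<open>Both problems share the objective and the variable X2, and their constraints
  correspond under \<open>\<beta>\<^sub>i = (1 + X1[i,M]) / 2\<close>. So it suffices to map feasible points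
  of each problem to feasible points of the other without changing X2. From SDP1 to
  SDP2 this needs \<open>|X1[i,M]| \<le> 1\<close>, which holds for every positive semidefinite matrix
  with unit diagonal. From SDP2 to SDP1 we take \<open>X1 = a a\<^sup>T + diag (1 - a\<^sub>k\<^sup>2)\<close> with
  \<open>a = (2\<beta>\<^sub>1 - 1, \<dots>, 2\<beta>\<^sub>M - 1, 1)\<close>, whose quadratic form is
  \<open>(a\<^sup>T x)\<^sup>2 + \<Sigma>\<^sub>k (1 - a\<^sub>k\<^sup>2) x\<^sub>k\<^sup>2 \<ge> 0\<close>.\<close>

lemma quadratic_form_real_mat:
  fixes A :: "real mat"
  assumes "A \<in> carrier_mat n n" "x \<in> carrier_vec n"
  shows "(A *\<^sub>v x) \<bullet>c x = (\<Sum>k\<in>{0..<n}. (\<Sum>j\<in>{0..<n}. A $$ (k, j) * x $ j) * x $ k)"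
  using assms by (simp add: scalar_prod_def row_def)

lemma sum_two_point:
  fixes f :: "nat \<Rightarrow> real"
  assumes "i < n" "j < n" "i \<noteq> j"
  shows "(\<Sum>k\<in>{0..<n}. f k * (if k = i then a else if k = j then b else 0)) = a * f i + b * f j"
proof -
  have "(\<Sum>k\<in>{0..<n}. f k * (if k = i then a else if k = j then b else 0))
      = (\<Sum>k\<in>{0..<n}. (if k = i then a * f i else 0) + (if k = j then b * f j else 0))"
    using assms(3) by (intro sum.cong) auto
  also have "\<dots> = a * f i + b * f j"
    using assms by (simp add: sum.distrib)
  finally show ?thesis .
qed

lemma quadratic_form_two_point:
  fixes A :: "real mat" and a b :: real
  assumes "A \<in> carrier_mat n n" "i < n" "j < n" "i \<noteq> j"
  shows "(A *\<^sub>v vec n (\<lambda>k. if k = i then a else if k = j then b else 0))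
           \<bullet>c vec n (\<lambda>k. if k = i then a else if k = j then b else 0)
    = a * a * A $$ (i, i) + a * b * (A $$ (i, j) + A $$ (j, i)) + b * b * A $$ (j, j)"
    (is "(A *\<^sub>v ?x) \<bullet>c ?x = _")
proof -
  have row: "(\<Sum>j'\<in>{0..<n}. A $$ (k, j') * ?x $ j') = a * A $$ (k, i) + b * A $$ (k, j)"
    if "k < n" for k
  proof -
    have "(\<Sum>j'\<in>{0..<n}. A $$ (k, j') * ?x $ j')
        = (\<Sum>j'\<in>{0..<n}. A $$ (k, j') * (if j' = i then a else if j' = j then b else 0))"
      by (intro sum.cong) auto
    then show ?thesis
      using sum_two_point[OF assms(2-4)] by simp
  qed
  have "(A *\<^sub>v ?x) \<bullet>c ?x = (\<Sum>k\<in>{0..<n}. (\<Sum>j'\<in>{0..<n}. A $$ (k, j') * ?x $ j') * ?x $ k)"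
    by (rule quadratic_form_real_mat[OF assms(1)]) simp
  also have "\<dots> = (\<Sum>k\<in>{0..<n}. (a * A $$ (k, i) + b * A $$ (k, j))
                       * (if k = i then a else if k = j then b else 0))"
  proof (intro sum.cong refl)
    fix k assume "k \<in> {0..<n}"
    then have k: "k < n" by simp
    show "(\<Sum>j'\<in>{0..<n}. A $$ (k, j') * ?x $ j') * ?x $ k
        = (a * A $$ (k, i) + b * A $$ (k, j)) * (if k = i then a else if k = j then b else 0)"
      unfolding row[OF k] index_vec[OF k] ..
  qed
  also have "\<dots> = a * (a * A $$ (i, i) + b * A $$ (i, j)) + b * (a * A $$ (j, i) + b * A $$ (j, j))"
    by (rule sum_two_point[OF assms(2-4)])
  finally show ?thesis by (simp add: algebra_simps)
qed

lemma psd_unit_diag_abs_le_1: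
  fixes A :: "real mat"
  assumes "psd_mat n A" "i < n" "j < n" "A $$ (i, i) = 1" "A $$ (j, j) = 1"
  shows "\<bar>A $$ (i, j)\<bar> \<le> 1"
proof (cases "i = j")
  case False
  have A: "A \<in> carrier_mat n n" and sym: "A $$ (j, i) = A $$ (i, j)"
    and pos: "\<And>x. x \<in> carrier_vec n \<Longrightarrow> 0 \<le> (A *\<^sub>v x) \<bullet>c x"
    using assms(1-3) unfolding psd_mat_def hermitian_mat_def by auto
  have "0 \<le> 2 + 2 * s * A $$ (i, j)" if "s * s = 1" for s :: real
    using pos[of "vec n (\<lambda>k. if k = i then 1 else if k = j then s else 0)"]
      quadratic_form_two_point[OF A assms(2,3) False, of 1 s] assms(4,5) sym that
    by simp
  from this[of 1] this[of "-1"] show ?thesis by auto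
qed (use assms in simp)

definition outer_plus_diag_mat :: "nat \<Rightarrow> (nat \<Rightarrow> real) \<Rightarrow> real mat" where
  "outer_plus_diag_mat n a = mat n n (\<lambda>(i, j). a i * a j + (if i = j then 1 - (a i)\<^sup>2 else 0))"

lemma outer_plus_diag_mat_carrier: "outer_plus_diag_mat n a \<in> carrier_mat n n"
  by (simp add: outer_plus_diag_mat_def)

lemma quadratic_form_outer_plus_diag_mat:
  assumes "x \<in> carrier_vec n"
  shows "(outer_plus_diag_mat n a *\<^sub>v x) \<bullet>c x
    = (\<Sum>k\<in>{0..<n}. a k * x $ k)\<^sup>2 + (\<Sum>k\<in>{0..<n}. (1 - (a k)\<^sup>2) * (x $ k)\<^sup>2)"
proof -
  define S where "S = (\<Sum>j\<in>{0..<n}. a j * x $ j)"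
  have row: "(\<Sum>j\<in>{0..<n}. outer_plus_diag_mat n a $$ (k, j) * x $ j)
      = a k * S + (1 - (a k)\<^sup>2) * x $ k" if "k < n" for k
  proof -
    have "(\<Sum>j\<in>{0..<n}. outer_plus_diag_mat n a $$ (k, j) * x $ j)
        = (\<Sum>j\<in>{0..<n}. a k * (a j * x $ j) + (if j = k then (1 - (a k)\<^sup>2) * x $ k else 0))"
      using that by (intro sum.cong) (auto simp: outer_plus_diag_mat_def algebra_simps)
    then show ?thesis
      using that by (simp add: sum.distrib sum_distrib_left S_def)
  qed
  have "(outer_plus_diag_mat n a *\<^sub>v x) \<bullet>c x
      = (\<Sum>k\<in>{0..<n}. S * (a k * x $ k) + (1 - (a k)\<^sup>2) * (x $ k)\<^sup>2)"
    unfolding quadratic_form_real_mat[OF outer_plus_diag_mat_carrier assms]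
  proof (intro sum.cong refl)
    fix k assume "k \<in> {0..<n}"
    then have k: "k < n" by simp
    show "(\<Sum>j\<in>{0..<n}. outer_plus_diag_mat n a $$ (k, j) * x $ j) * x $ k
        = S * (a k * x $ k) + (1 - (a k)\<^sup>2) * (x $ k)\<^sup>2"
      unfolding row[OF k]
      by (simp add: algebra_simps power2_eq_square)
  qed
  also have "\<dots> = S\<^sup>2 + (\<Sum>k\<in>{0..<n}. (1 - (a k)\<^sup>2) * (x $ k)\<^sup>2)"
    by (simp add: sum.distrib sum_distrib_left[symmetric] S_def power2_eq_square)
  finally show ?thesis
    using assms by (simp add: S_def outer_plus_diag_mat_def)
qed

lemma psd_outer_plus_diag_mat:
  assumes "\<And>k. k < n \<Longrightarrow> (a k)\<^sup>2 \<le> 1"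
  shows "psd_mat n (outer_plus_diag_mat n a)"
  unfolding psd_mat_def
proof (intro conjI ballI)
  show "hermitian_mat n (outer_plus_diag_mat n a)"
    unfolding hermitian_mat_def outer_plus_diag_mat_def by auto
  show "0 \<le> (outer_plus_diag_mat n a *\<^sub>v x) \<bullet>c x" if "x \<in> carrier_vec n" for x
    unfolding quadratic_form_outer_plus_diag_mat[OF that]
    using assms by (intro add_nonneg_nonneg sum_nonneg mult_nonneg_nonneg) auto
qed

lemma sdp2_feasible_of_sdp1_feasible:
  assumes "sdp1_feasible N M Q \<epsilon> H X1 X2"
  shows "sdp2_feasible N M Q \<epsilon> H (vec M (\<lambda>i. 1/2 + 1/2 * X1 $$ (i, M))) X2"
proof -
  have X1: "psd_mat (M + 1) X1" "\<forall>i<M + 1. X1 $$ (i, i) = 1"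
    and sum: "(\<Sum>i<M. X1 $$ (i, M)) = 2 * real Q - real M"
    using assms unfolding sdp1_feasible_def by auto
  have "0 \<le> 1/2 + 1/2 * X1 $$ (i, M) \<and> 1/2 + 1/2 * X1 $$ (i, M) \<le> 1" if "i < M" for i
    using psd_unit_diag_abs_le_1[OF X1(1), of i M] X1(2) that by (simp add: abs_le_iff)
  moreover have "(\<Sum>i<M. 1/2 + 1/2 * X1 $$ (i, M)) = real M / 2 + (\<Sum>i<M. X1 $$ (i, M)) / 2"
    by (simp add: sum.distrib sum_divide_distrib)
  with sum have "(\<Sum>i<M. 1/2 + 1/2 * X1 $$ (i, M)) = real Q"
    by (simp add: field_simps)
  moreover have "mtrace (H i * X2)
      \<ge> of_real ((1/2 + 1/2 * X1 $$ (i, M)) + (1 - (1/2 + 1/2 * X1 $$ (i, M))) * \<epsilon>)"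
    if "i < M" for i
  proof -
    have "(1/2 + 1/2 * X1 $$ (i, M)) + (1 - (1/2 + 1/2 * X1 $$ (i, M))) * \<epsilon>
        = (1 + X1 $$ (i, M)) / 2 + (1 - X1 $$ (i, M)) / 2 * \<epsilon>"
      by (simp add: field_simps)
    then show ?thesis
      using assms that unfolding sdp1_feasible_def by simp
  qed
  ultimately show ?thesis
    using assms unfolding sdp1_feasible_def sdp2_feasible_def by simp
qed

lemma sdp1_feasible_of_sdp2_feasible:
  assumes "sdp2_feasible N M Q \<epsilon> H \<beta> X2"
  defines "X1 \<equiv> outer_plus_diag_mat (M + 1) (\<lambda>k. if k < M then 2 * \<beta> $ k - 1 else 1)"
  shows "sdp1_feasible N M Q \<epsilon> H X1 X2" and "\<forall>i<M. X1 $$ (i, M) = 2 * \<beta> $ i - 1"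
proof -
  have \<beta>: "\<forall>i<M. 0 \<le> \<beta> $ i \<and> \<beta> $ i \<le> 1" and sum: "(\<Sum>i<M. \<beta> $ i) = real Q"
    using assms(1) unfolding sdp2_feasible_def by auto
  show entries: "\<forall>i<M. X1 $$ (i, M) = 2 * \<beta> $ i - 1"
    unfolding X1_def outer_plus_diag_mat_def by simp
  have "(2 * t - 1)\<^sup>2 \<le> (1::real)" if "0 \<le> t" "t \<le> 1" for t
    using mult_nonneg_nonpos[OF that(1), of "t - 1"] that(2)
    by (simp add: power2_eq_square algebra_simps)
  then have psd: "psd_mat (M + 1) X1"
    unfolding X1_def using \<beta> by (intro psd_outer_plus_diag_mat) auto
  have "(\<Sum>i<M. X1 $$ (i, M)) = 2 * real Q - real M"
    using entries sum by (simp add: sum_subtractf sum_distrib_left[symmetric])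
  moreover have "\<forall>i<M + 1. X1 $$ (i, i) = 1"
    unfolding X1_def outer_plus_diag_mat_def by (simp add: power2_eq_square)
  moreover have "mtrace (H i * X2) \<ge> of_real ((1 + X1 $$ (i, M)) / 2 + (1 - X1 $$ (i, M)) / 2 * \<epsilon>)"
    if "i < M" for i
  proof -
    have "(1 + X1 $$ (i, M)) / 2 + (1 - X1 $$ (i, M)) / 2 * \<epsilon> = \<beta> $ i + (1 - \<beta> $ i) * \<epsilon>"
      unfolding entries[rule_format, OF that] by (simp add: field_simps)
    then show ?thesis
      using assms(1) that unfolding sdp2_feasible_def by simp
  qed
  ultimately show "sdp1_feasible N M Q \<epsilon> H X1 X2"
    using assms(1) psd entries unfolding sdp1_feasible_def sdp2_feasible_def psd_mat_def
    by simp
qed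

lemma lemma2p1_claim_holds:
  "lemma2p1_claim TYPE('a::{conjugatable_ordered_field,real_algebra_1})"
  unfolding lemma2p1_claim_def
proof (intro allI impI conjI)
  fix N M Q \<epsilon> and H :: "nat \<Rightarrow> 'a mat" and X1 X2
  assume "sdp1_optimal N M Q \<epsilon> H X1 X2"
  then have feasible: "sdp1_feasible N M Q \<epsilon> H X1 X2"
    and minimal: "\<And>Y1 Y2. sdp1_feasible N M Q \<epsilon> H Y1 Y2 \<Longrightarrow> mtrace X2 \<le> mtrace Y2"
    unfolding sdp1_optimal_def by auto
  have "mtrace X2 \<le> mtrace Y2" if "sdp2_feasible N M Q \<epsilon> H \<gamma> Y2" for \<gamma> Y2
    using minimal sdp1_feasible_of_sdp2_feasible(1)[OF that] .
  then show "sdp2_optimal N M Q \<epsilon> H (vec M (\<lambda>i. 1/2 + 1/2 * X1 $$ (i, M))) X2"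
    unfolding sdp2_optimal_def using sdp2_feasible_of_sdp1_feasible[OF feasible] by blast
next
  fix N M Q \<epsilon> and H :: "nat \<Rightarrow> 'a mat" and \<beta> X2
  assume "sdp2_optimal N M Q \<epsilon> H \<beta> X2"
  then have feasible: "sdp2_feasible N M Q \<epsilon> H \<beta> X2"
    and minimal: "\<And>\<gamma> Y2. sdp2_feasible N M Q \<epsilon> H \<gamma> Y2 \<Longrightarrow> mtrace X2 \<le> mtrace Y2"
    unfolding sdp2_optimal_def by auto
  obtain X1 where X1: "sdp1_feasible N M Q \<epsilon> H X1 X2" "\<forall>i<M. X1 $$ (i, M) = 2 * \<beta> $ i - 1"
    using sdp1_feasible_of_sdp2_feasible[OF feasible] by blast
  have "mtrace X2 \<le> mtrace Y2" if "sdp1_feasible N M Q \<epsilon> H Y1 Y2" for Y1 Y2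
    using minimal sdp2_feasible_of_sdp1_feasible[OF that] .
  moreover have "hermitian_mat (M + 1) X1"
    using X1(1) unfolding sdp1_feasible_def by simp
  ultimately show "\<exists>X1. hermitian_mat (M + 1) X1 \<and> (\<forall>i<M. X1 $$ (i, M) = 2 * \<beta> $ i - 1) \<and>
      sdp1_optimal N M Q \<epsilon> H X1 X2"
    unfolding sdp1_optimal_def using X1 by blast
qed

theorem lemma2p1:
  shows "lemma2p1_claim TYPE(real) \<and> lemma2p1_claim TYPE(complex)"
  using lemma2p1_claim_holds[where 'a=real] lemma2p1_claim_holds[where 'a=complex] by simp

end
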